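(* For all types $A$, $B$, $C$: if $A \simeq B$ and $B \equiv C$, then $A \simeq C$.
   Context: Types and rows share one grammar: $A,B,C,\rho ::= X \mid \alpha \mid \star \mid \iota \mid A\to B \mid \forall X{:}K.\,A \mid [\rho] \mid \langle\rho\rangle \mid \cdot \mid \ell{:}A;\rho$, where $X$ ranges over type variables (bound by $\forall$), $\alpha$ over type names, $\star$ is the dynamic type (also serving as the dynamic row), $\iota$ over base types, $[\rho]$ and $\langle\rho\rangle$ are record and variant types, $\cdot$ is the empty row, $\ell$ ranges over labels, and $K\in\{\mathsf T,\mathsf R\}$ is a kind. Types are identified up to renaming of bound variables; $\mathit{ftv}(A)$ is the set of free type variables. Row matching $\rho \triangleright_\ell A,\rho'$ is defined by: $(\ell{:}A;\rho)\triangleright_\ell A,\rho$; if $\ell'\neq\ell$ and $\rho\triangleright_\ell A,\rho'$ then $(\ell'{:}B;\rho)\triangleright_\ell A,(\ell'{:}B;\rho')$; and $\star\triangleright_\ell \star,\star$. $\mathbf{QPoly}(A)$ holds iff $A$ is not of the form $\forall X{:}K.\,B$ and $\star$ occurs in $A$. Row concatenation $\rho_1\odot\rho_2$ is defined only when $\rho_1=\ell_1{:}A_1;\dots;\ell_n{:}A_n;\cdot$, and then equals $\ell_1{:}A_1;\dots;\ell_n{:}A_n;\rho_2$. $\mathit{dom}(\rho)$ is the set of labels in the top-level label prefix of $\rho$. A row $\rho$ ends with $\star$ if $\rho=\rho'\odot\star$ for some $\rho'$. Type equivalence $\equiv$ is the least equivalence relation that is a congruence for $\to$, $\forall X{:}K.\,-$,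 $[-]$, $\langle-\rangle$ and $\ell{:}-;-$, and contains $\ell{:}A;\ell'{:}B;\rho \equiv \ell'{:}B;\ell{:}A;\rho$ whenever $\ell\neq\ell'$. Consistency $\simeq$ is defined inductively: $A\simeq A$; $\star\simeq A$; $A\simeq\star$; $A_1\to A_2\simeq B_1\to B_2$ if $A_1\simeq B_1$ and $A_2\simeq B_2$; $\forall X{:}K.A\simeq\forall X{:}K.B$ if $A\simeq B$; $\forall X{:}K.A\simeq B$ if $\mathbf{QPoly}(B)$, $X\notin\mathit{ftv}(B)$ and $A\simeq B$; $A\simeq\forall X{:}K.B$ if $\mathbf{QPoly}(A)$, $X\notin\mathit{ftv}(A)$ and $A\simeq B$; $[\rho_1]\simeq[\rho_2]$ and $\langle\rho_1\rangle\simeq\langle\rho_2\rangle$ if $\rho_1\simeq\rho_2$; $\ell{:}A;\rho_1\simeq B$ if $B\triangleright_\ell B',\rho_2$, $A\simeq B'$ and $\rho_1\simeq\rho_2$; $A\simeq \ell{:}B;\rho_2$ if $A\triangleright_\ell A',\rho_1$, $A'\simeq B$ and $\rho_1\simeq\rho_2$. *)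

theory Defs
  imports Main
begin

text \<open>Types and rows share one grammar. Bound type variables are represented by
  de Bruijn indices (TVar i), which realises the identification of types up to
  renaming of bound variables.\<close>

datatype kind = KT | KR

datatype ('n, 'b, 'l) ty =
    TVar nat
  | TName 'n
  | Dyn                           (* the dynamic type / row *)
  | Base 'b
  | Fun "('n, 'b, 'l) ty" "('n, 'b, 'l) ty"
  | Forall kind "('n, 'b, 'l) ty"
  | Record "('n, 'b, 'l) ty"
  | Variant "('n, 'b, 'l) ty"
  | REmpty
  | RCons 'l "('n, 'b, 'l) ty" "('n, 'b, 'l) ty"

fun shift :: "nat \<Rightarrow> ('n, 'b, 'l) ty \<Rightarrow> ('n, 'b, 'l) ty" where
  "shift c (TVar i) = (if c \<le> i then TVar (Suc i) else TVar i)"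
| "shift c (TName a) = TName a"
| "shift c Dyn = Dyn"
| "shift c (Base b) = Base b"
| "shift c (Fun A B) = Fun (shift c A) (shift c B)"
| "shift c (Forall K A) = Forall K (shift (Suc c) A)"
| "shift c (Record r) = Record (shift c r)"
| "shift c (Variant r) = Variant (shift c r)"
| "shift c REmpty = REmpty"
| "shift c (RCons l A r) = RCons l (shift c A) (shift c r)"

fun dyn_occurs :: "('n, 'b, 'l) ty \<Rightarrow> bool" where
  "dyn_occurs (TVar i) = False"
| "dyn_occurs (TName a) = False"
| "dyn_occurs Dyn = True"
| "dyn_occurs (Base b) = False"
| "dyn_occurs (Fun A B) = (dyn_occurs A \<or> dyn_occurs B)"
| "dyn_occurs (Forall K A) = dyn_occurs A"
| "dyn_occurs (Record r) = dyn_occurs r"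
| "dyn_occurs (Variant r) = dyn_occurs r"
| "dyn_occurs REmpty = False"
| "dyn_occurs (RCons l A r) = (dyn_occurs A \<or> dyn_occurs r)"

definition QPoly :: "('n, 'b, 'l) ty \<Rightarrow> bool" where
  "QPoly A \<longleftrightarrow> (\<nexists>K B. A = Forall K B) \<and> dyn_occurs A"

inductive row_match :: "('n, 'b, 'l) ty \<Rightarrow> 'l \<Rightarrow> ('n, 'b, 'l) ty \<Rightarrow> ('n, 'b, 'l) ty \<Rightarrow> bool" where
  rm_head: "row_match (RCons l A r) l A r"
| rm_skip: "l' \<noteq> l \<Longrightarrow> row_match r l A r' \<Longrightarrow> row_match (RCons l' B r) l A (RCons l' B r')"
| rm_dyn: "row_match Dyn l Dyn Dyn"

inductive ty_equiv :: "('n, 'b, 'l) ty \<Rightarrow> ('n, 'b, 'l) ty \<Rightarrow> bool" (infix "\<equiv>\<^sub>t" 50) where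
  eq_refl: "A \<equiv>\<^sub>t A"
| eq_sym: "A \<equiv>\<^sub>t B \<Longrightarrow> B \<equiv>\<^sub>t A"
| eq_trans: "A \<equiv>\<^sub>t B \<Longrightarrow> B \<equiv>\<^sub>t C \<Longrightarrow> A \<equiv>\<^sub>t C"
| eq_fun: "A1 \<equiv>\<^sub>t B1 \<Longrightarrow> A2 \<equiv>\<^sub>t B2 \<Longrightarrow> Fun A1 A2 \<equiv>\<^sub>t Fun B1 B2"
| eq_forall: "A \<equiv>\<^sub>t B \<Longrightarrow> Forall K A \<equiv>\<^sub>t Forall K B"
| eq_record: "r1 \<equiv>\<^sub>t r2 \<Longrightarrow> Record r1 \<equiv>\<^sub>t Record r2"
| eq_variant: "r1 \<equiv>\<^sub>t r2 \<Longrightarrow> Variant r1 \<equiv>\<^sub>t Variant r2"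
| eq_rcons: "A \<equiv>\<^sub>t B \<Longrightarrow> r1 \<equiv>\<^sub>t r2 \<Longrightarrow> RCons l A r1 \<equiv>\<^sub>t RCons l B r2"
| eq_swap: "l \<noteq> l' \<Longrightarrow> RCons l A (RCons l' B r) \<equiv>\<^sub>t RCons l' B (RCons l A r)"

text \<open>Consistency. In the rules with a quantifier on one side only, the other side
  is shifted under the binder; the side condition X \<notin> ftv(B) is thereby built in.\<close>
inductive consistent :: "('n, 'b, 'l) ty \<Rightarrow> ('n, 'b, 'l) ty \<Rightarrow> bool" (infix "\<simeq>" 50) where
  c_refl: "A \<simeq> A"
| c_dynL: "Dyn \<simeq> A"
| c_dynR: "A \<simeq> Dyn"
| c_fun: "A1 \<simeq> B1 \<Longrightarrow> A2 \<simeq> B2 \<Longrightarrow> Fun A1 A2 \<simeq> Fun B1 B2"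
| c_forall: "A \<simeq> B \<Longrightarrow> Forall K A \<simeq> Forall K B"
| c_forallL: "QPoly B \<Longrightarrow> A \<simeq> shift 0 B \<Longrightarrow> Forall K A \<simeq> B"
| c_forallR: "QPoly A \<Longrightarrow> shift 0 A \<simeq> B \<Longrightarrow> A \<simeq> Forall K B"
| c_record: "r1 \<simeq> r2 \<Longrightarrow> Record r1 \<simeq> Record r2"
| c_variant: "r1 \<simeq> r2 \<Longrightarrow> Variant r1 \<simeq> Variant r2"
| c_rconsL: "row_match B l B' r2 \<Longrightarrow> A \<simeq> B' \<Longrightarrow> r1 \<simeq> r2 \<Longrightarrow> RCons l A r1 \<simeq> B"
| c_rconsR: "row_match A l A' r1 \<Longrightarrow> A' \<simeq> B \<Longrightarrow> r1 \<simeq> r2 \<Longrightarrow> A \<simeq> RCons l B r2"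

end

(*
  Type equivalence is the reflexive-transitive closure of swap_step, which exchanges two
  adjacent distinct labels at a single position inside a type; this relation is symmetric.
  It therefore suffices to show that consistency is preserved by one swap on the right,
  by induction on the consistency derivation. Row matching commutes with swaps: matching
  a label in the swapped row gives a field and a residual row that differ from the
  original ones by at most one swap. The only delicate case is a derivation of
  A \<simeq> l:B; l':Y; r by the rule for l:B on the right whose first two labels are then
  swapped: there the field matched at l in A has to be moved behind l', which works
  because matching two distinct labels in either order gives the same result.
*)

theory Submission
  imports Defs
begin

inductive swap_step :: "('n, 'b, 'l) ty \<Rightarrow> ('n, 'b, 'l) ty \<Rightarrow> bool" where
  swap_FunL: "swap_step A A' \<Longrightarrow> swap_step (Fun A B) (Fun A' B)"
| swap_FunR: "swap_step B B' \<Longrightarrow> swap_step (Fun A B) (Fun A B')"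
| swap_Forall: "swap_step A A' \<Longrightarrow> swap_step (Forall K A) (Forall K A')"
| swap_Record: "swap_step r r' \<Longrightarrow> swap_step (Record r) (Record r')"
| swap_Variant: "swap_step r r' \<Longrightarrow> swap_step (Variant r) (Variant r')"
| swap_RCons_head: "swap_step A A' \<Longrightarrow> swap_step (RCons l A r) (RCons l A' r)"
| swap_RCons_tail: "swap_step r r' \<Longrightarrow> swap_step (RCons l A r) (RCons l A r')"
| swap_labels: "l \<noteq> l' \<Longrightarrow> swap_step (RCons l A (RCons l' B r)) (RCons l' B (RCons l A r))"

inductive_cases swap_step_DynE: "swap_step Dyn C"

lemma swap_step_RConsE [consumes 1, case_names head tail swap]:
  assumes "swap_step (RCons l A r) C"
  obtains (head) A' where "C = RCons l A' r" and "swap_step A A'"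
    | (tail) r' where "C = RCons l A r'" and "swap_step r r'"
    | (swap) l' B r0 where "r = RCons l' B r0" and "l \<noteq> l'" and "C = RCons l' B (RCons l A r0)"
  using assms by (cases rule: swap_step.cases) auto

lemma symp_swap_step: "symp swap_step"
proof (rule sympI)
  show "swap_step B A" if "swap_step A B" for A B :: "('n, 'b, 'l) ty"
    using that by induction (auto intro: swap_step.intros)
qed

lemma swap_step_shift: "swap_step A B \<Longrightarrow> swap_step (shift c A) (shift c B)"
  by (induction arbitrary: c rule: swap_step.induct) (auto intro: swap_step.intros)

lemma swap_step_dyn_occurs: "swap_step A B \<Longrightarrow> dyn_occurs B = dyn_occurs A"
  by (induction rule: swap_step.induct) auto

lemma swap_step_QPoly: "swap_step A B \<Longrightarrow> QPoly A \<Longrightarrow> QPoly B"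
  unfolding QPoly_def by (auto dest: swap_step_dyn_occurs elim: swap_step.cases)

lemma rtranclp_map:
  assumes "\<And>x y. r x y \<Longrightarrow> r (f x) (f y)" and "r\<^sup>*\<^sup>* x y"
  shows "r\<^sup>*\<^sup>* (f x) (f y)"
  using assms(2) by induction (auto intro: rtranclp.rtrancl_into_rtrancl assms(1))

lemma ty_equiv_imp_swap_steps: "A \<equiv>\<^sub>t B \<Longrightarrow> swap_step\<^sup>*\<^sup>* A B"
proof (induction rule: ty_equiv.induct)
  case (eq_sym A B)
  show ?case by (rule sympD[OF symp_rtranclp[OF symp_swap_step] eq_sym.IH])
next
  case (eq_fun A1 B1 A2 B2)
  have "swap_step\<^sup>*\<^sup>* (Fun A1 A2) (Fun B1 A2)"
    using rtranclp_map[OF swap_FunL eq_fun.IH(1)] .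
  also have "swap_step\<^sup>*\<^sup>* (Fun B1 A2) (Fun B1 B2)"
    using rtranclp_map[OF swap_FunR eq_fun.IH(2)] .
  finally show ?case .
next
  case (eq_rcons A B r1 r2 l)
  have "swap_step\<^sup>*\<^sup>* (RCons l A r1) (RCons l B r1)"
    using rtranclp_map[OF swap_RCons_head eq_rcons.IH(1)] .
  also have "swap_step\<^sup>*\<^sup>* (RCons l B r1) (RCons l B r2)"
    using rtranclp_map[OF swap_RCons_tail eq_rcons.IH(2)] .
  finally show ?case .
qed (auto intro: swap_step.intros rtranclp_map)

lemma swap_step_imp_consistent: "swap_step A B \<Longrightarrow> A \<simeq> B"
proof (induction rule: swap_step.induct)
  case (swap_labels l l' A B r)
  then have "row_match (RCons l' B (RCons l A r)) l A (RCons l' B r)"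
    by (auto intro: row_match.intros)
  then show ?case by (rule c_rconsL) (rule c_refl)+
qed (auto intro: consistent.intros row_match.intros)

lemma row_match_RConsE [consumes 1, case_names head skip]:
  assumes "row_match (RCons l0 X r) l A r'"
  obtains (head) "l = l0" and "A = X" and "r' = r"
    | (skip) r'' where "r' = RCons l0 X r''" and "l0 \<noteq> l" and "row_match r l A r''"
  using assms by (cases rule: row_match.cases) auto

lemma row_match_commute:
  "row_match A l A' r \<Longrightarrow> row_match r l' B r' \<Longrightarrow> l \<noteq> l' \<Longrightarrow>
    \<exists>\<rho>. row_match A l' B \<rho> \<and> row_match \<rho> l A' r'"
proof (induction arbitrary: r' rule: row_match.induct)
  case (rm_skip l0 l ra A' ra' X)
  from rm_skip.prems(1) show ?case
  proof (cases rule: row_match_RConsE)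
    case head
    then show ?thesis using rm_skip.hyps by (auto intro: row_match.intros)
  next
    case (skip r'')
    with rm_skip.IH rm_skip.prems(2)
    obtain \<rho> where "row_match ra l' B \<rho>" and "row_match \<rho> l A' r''"
      by blast
    with skip rm_skip.hyps(1) show ?thesis by (auto intro: row_match.intros)
  qed
qed (auto elim: row_match.cases intro: row_match.intros)

lemma consistent_rconsR_commute:
  assumes "row_match A l A' r1" and "row_match r1 l' Z \<rho>" and "l \<noteq> l'"
    and "A' \<simeq> B" and "Z \<simeq> Y" and "\<rho> \<simeq> r"
  shows "A \<simeq> RCons l' Y (RCons l B r)"
proof -
  obtain \<sigma> where "row_match A l' Z \<sigma>" and "row_match \<sigma> l A' \<rho>"
    using row_match_commute[OF assms(1-3)] by blast
  with assms(4-6) show ?thesis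
    by (blast intro: c_rconsR)
qed

lemma consistent_rconsR_swapped:
  assumes "row_match A l A' r1" and "A' \<simeq> B" and "r1 \<simeq> RCons l' Y r" and "l \<noteq> l'"
  shows "A \<simeq> RCons l' Y (RCons l B r)"
  using assms
proof (induction arbitrary: r rule: row_match.induct)
  case (rm_head l A' r1)
  have "row_match (RCons l' Y (RCons l B r)) l B (RCons l' Y r)"
    using rm_head.prems(3) by (auto intro: row_match.intros)
  then show ?case using rm_head.prems(1,2) by (rule c_rconsL)
next
  case rm_dyn
  show ?case by (rule c_dynL)
next
  case (rm_skip l0 l ra A' ra' X)
  have match: "row_match (RCons l0 X ra) l A' (RCons l0 X ra')"
    using rm_skip.hyps by (rule row_match.rm_skip)
  from rm_skip.prems(2) show ?case
  proof (cases rule: consistent.cases)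
    case c_refl
    then show ?thesis
      using consistent_rconsR_commute[OF match rm_head _ _ consistent.c_refl consistent.c_refl]
        rm_skip.prems by simp
  next
    case (c_rconsR Z \<rho>)
    then show ?thesis
      using consistent_rconsR_commute[OF match] rm_skip.prems by blast
  next
    case (c_rconsL X' r2)
    show ?thesis
    proof (cases "l0 = l'")
      case True
      with c_rconsL have "X \<simeq> Y" and "ra' \<simeq> r"
        by (auto elim: row_match_RConsE)
      with True show ?thesis
        using consistent_rconsR_commute[OF match rm_head] rm_skip.prems by blast
    next
      case False
      with c_rconsL obtain r3 where r3: "row_match r l0 X' r3" and "r2 = RCons l' Y r3"
        by (auto elim: row_match_RConsE)
      have "row_match (RCons l' Y (RCons l B r)) l0 X' (RCons l' Y (RCons l B r3))"
        using r3 False rm_skip.hyps(1) by (intro row_match.rm_skip) auto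
      moreover have "ra \<simeq> RCons l' Y (RCons l B r3)"
        using rm_skip.IH rm_skip.prems c_rconsL \<open>r2 = RCons l' Y r3\<close> by blast
      ultimately show ?thesis
        using c_rconsL(2) by (blast intro: consistent.c_rconsL)
    qed
  qed
qed

lemma row_match_swap_step:
  "row_match B l B' r \<Longrightarrow> swap_step B C \<Longrightarrow>
    \<exists>C' r'. row_match C l C' r' \<and> swap_step\<^sup>=\<^sup>= B' C' \<and> swap_step\<^sup>=\<^sup>= r r'"
proof (induction arbitrary: C rule: row_match.induct)
  case (rm_head l A r)
  from rm_head show ?case
    by (cases rule: swap_step_RConsE) (auto intro: row_match.intros)
next
  case (rm_skip l0 l r A r' X)
  from rm_skip.prems show ?case
  proof (cases rule: swap_step_RConsE)
    case (head X')
    then show ?thesis using rm_skip.hyps by (blast intro: row_match.intros swap_step.intros)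
  next
    case (tail r0)
    with rm_skip.IH obtain C' r0'
      where "row_match r0 l C' r0'" and "swap_step\<^sup>=\<^sup>= A C'" and "swap_step\<^sup>=\<^sup>= r' r0'"
      by blast
    with tail rm_skip.hyps show ?thesis by (auto intro: row_match.intros swap_step.intros)
  next
    case (swap l1 Y r1)
    show ?thesis
    proof (cases "l1 = l")
      case True
      then have "A = Y" "r' = r1" using rm_skip.hyps swap by (auto elim: row_match_RConsE)
      then show ?thesis using swap rm_skip.hyps True by (auto intro: row_match.intros)
    next
      case False
      then obtain r1' where "row_match r1 l A r1'" "r' = RCons l1 Y r1'"
        using rm_skip.hyps swap by (auto elim: row_match_RConsE)
      then show ?thesis
        using swap rm_skip.hyps False by (auto intro: row_match.intros swap_step.intros)
    qed
  qed
next
  case rm_dyn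
  then show ?case by (auto elim: swap_step_DynE)
qed

lemma consistent_swap_step: "A \<simeq> B \<Longrightarrow> swap_step B C \<Longrightarrow> A \<simeq> C"
proof (induction arbitrary: C rule: consistent.induct)
  case (c_refl A)
  then show ?case by (rule swap_step_imp_consistent)
next
  case (c_dynR A)
  then show ?case by (auto elim: swap_step_DynE)
next
  case (c_fun A1 B1 A2 B2)
  from c_fun.prems show ?case
    by (cases rule: swap_step.cases) (auto intro: consistent.c_fun c_fun.IH c_fun.hyps)
next
  case (c_forall A B K)
  from c_forall.prems show ?case
    by (cases rule: swap_step.cases) (auto intro: consistent.c_forall c_forall.IH)
next
  case (c_forallL B A K)
  show ?case
    using swap_step_QPoly[OF c_forallL.prems c_forallL.hyps(1)]
      c_forallL.IH[OF swap_step_shift[OF c_forallL.prems]]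
    by (rule consistent.c_forallL)
next
  case (c_forallR A B K)
  from c_forallR.prems show ?case
    by (cases rule: swap_step.cases)
      (auto intro: consistent.c_forallR[OF c_forallR.hyps(1)] c_forallR.IH)
next
  case (c_record r1 r2)
  from c_record.prems show ?case
    by (cases rule: swap_step.cases) (auto intro: consistent.c_record c_record.IH)
next
  case (c_variant r1 r2)
  from c_variant.prems show ?case
    by (cases rule: swap_step.cases) (auto intro: consistent.c_variant c_variant.IH)
next
  case (c_rconsL B l B' r2 A r1)
  obtain C' r2'
    where "row_match C l C' r2'" and "swap_step\<^sup>=\<^sup>= B' C'" and "swap_step\<^sup>=\<^sup>= r2 r2'"
    using row_match_swap_step[OF c_rconsL.hyps(1) c_rconsL.prems] by blast
  with c_rconsL.hyps(2,3) c_rconsL.IH show ?case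
    by (blast intro: consistent.c_rconsL)
next
  case (c_rconsR A l A' r1 B r2)
  from c_rconsR.prems show ?case
  proof (cases rule: swap_step_RConsE)
    case (head B')
    then show ?thesis
      using c_rconsR.hyps(1,3) c_rconsR.IH(1) by (blast intro: consistent.c_rconsR)
  next
    case (tail r2')
    then show ?thesis
      using c_rconsR.hyps(1,2) c_rconsR.IH(2) by (blast intro: consistent.c_rconsR)
  next
    case (swap l' Y r)
    then show ?thesis
      using consistent_rconsR_swapped[OF c_rconsR.hyps(1,2)] c_rconsR.hyps(3) by simp
  qed
qed (rule consistent.c_dynL)

lemma consistent_swap_steps: "A \<simeq> B \<Longrightarrow> swap_step\<^sup>*\<^sup>* B C \<Longrightarrow> A \<simeq> C"
  by (erule rtranclp_induct) (auto dest: consistent_swap_step)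

theorem mainTheorem4:
  fixes A B C :: "('n, 'b, 'l) ty"
  assumes "A \<simeq> B" and "B \<equiv>\<^sub>t C"
  shows "A \<simeq> C"
  using assms(1) ty_equiv_imp_swap_steps[OF assms(2)] by (rule consistent_swap_steps)

end
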